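(* Let $\omega$ be a Hölder-like modulus of continuity and $(\mathcal{X},d_{\mathcal{X}})$ a metric space. Then $d^\omega_{\mathcal{X}}:=\omega\circ d_{\mathcal{X}}$ is a metric on $\mathcal{X}$, and the identity map $(\mathcal{X},d_{\mathcal{X}})\to(\mathcal{X},d^\omega_{\mathcal{X}})$ is quasisymmetric. Furthermore, if $K\subseteq\mathcal{X}$ is $d_{\mathcal{X}}$-doubling then it is also $d^\omega_{\mathcal{X}}$-doubling.
   Context: A Hölder-like modulus of continuity is a function $\omega:[0,\infty)\to[0,\infty)$ with $\omega(0)=0$ that is strictly increasing, subadditive and continuous, for which there is an increasing homeomorphism $h_\omega:[0,\infty)\to[0,\infty)$ with $\omega(st)\le h_\omega(s)\omega(t)$ for all $s,t\ge0$. A topological embedding $\varphi:(\mathcal{X},d_{\mathcal{X}})\to(\mathcal{Y},d_{\mathcal{Y}})$ is quasisymmetric if there is a strictly increasing surjection $\eta:[0,\infty)\to[0,\infty)$ such that $d_{\mathcal{X}}(x_1,x_2)\le t\,d_{\mathcal{X}}(x_1,x_3)$ implies $d_{\mathcal{Y}}(\varphi(x_1),\varphi(x_2))\le\eta(t)d_{\mathcal{Y}}(\varphi(x_1),\varphi(x_3))$. A (subset of a) metric space is doubling if there is a finite number $C$ such that every ball of radius $2r$ can be covered by $C$ balls of radius $r$. *)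

theory Defs
  imports "HOL-Analysis.Analysis"
begin

definition holder_like_modulus :: "(real \<Rightarrow> real) \<Rightarrow> bool" where
  "holder_like_modulus \<omega> \<longleftrightarrow>
     \<omega> ` {0..} \<subseteq> {0..} \<and> \<omega> 0 = 0 \<and>
     strict_mono_on {0..} \<omega> \<and>
     (\<forall>s\<ge>0. \<forall>t\<ge>0. \<omega> (s + t) \<le> \<omega> s + \<omega> t) \<and>
     continuous_on {0..} \<omega> \<and>
     (\<exists>h g. homeomorphism {0..} {0..} h g \<and> mono_on {0..} h \<and>
        (\<forall>s\<ge>0. \<forall>t\<ge>0. \<omega> (s * t) \<le> h s * \<omega> t))"

definition quasisymmetric ::
  "'a set \<Rightarrow> ('a \<Rightarrow> 'a \<Rightarrow> real) \<Rightarrow> 'b set \<Rightarrow> ('b \<Rightarrow> 'b \<Rightarrow> real) \<Rightarrow> ('a \<Rightarrow> 'b) \<Rightarrow> bool" where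
  "quasisymmetric M1 d1 M2 d2 f \<longleftrightarrow>
     embedding_map (Metric_space.mtopology M1 d1) (Metric_space.mtopology M2 d2) f \<and>
     (\<exists>\<eta>::real \<Rightarrow> real. strict_mono_on {0..} \<eta> \<and> \<eta> ` {0..} = {0..} \<and>
        (\<forall>x1\<in>M1. \<forall>x2\<in>M1. \<forall>x3\<in>M1. \<forall>t\<ge>0.
           d1 x1 x2 \<le> t * d1 x1 x3 \<longrightarrow> d2 (f x1) (f x2) \<le> \<eta> t * d2 (f x1) (f x3)))"

definition doubling_subset :: "'a set \<Rightarrow> ('a \<Rightarrow> 'a \<Rightarrow> real) \<Rightarrow> 'a set \<Rightarrow> bool" where
  "doubling_subset M d K \<longleftrightarrow>
     (\<exists>C::nat. \<forall>x\<in>K. \<forall>r>0. \<exists>F. finite F \<and> card F \<le> C \<and> F \<subseteq> K \<and>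
        K \<inter> Metric_space.mball M d x (2 * r) \<subseteq> (\<Union>y\<in>F. Metric_space.mball M d y r))"

end

theory Submission
  imports Defs
begin

text \<open>Since \<omega> is strictly increasing, subadditive and vanishes only at 0, \<omega> \<circ> d is a metric
  whose ball of radius \<omega> \<rho> is the d-ball of radius \<rho>; continuity of \<omega> at 0 then makes the
  topologies agree, and \<omega> (d x1 x2) \<le> \<omega> (t d x1 x3) \<le> h t \<omega> (d x1 x3) gives quasisymmetry
  with \<eta> = h. Choosing a with h a = 1/2 yields 2 \<omega> t \<le> \<omega> (t / a), so \<omega> maps [0,\<infinity>) onto
  itself and every (\<omega> \<circ> d)-ball of radius 2 \<omega> \<rho> lies in the d-ball of radius \<rho> / a \<le> 2^m \<rho>.
  Iterating the d-doubling property m times covers the latter by C^m d-balls of radius \<rho>, which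
  are (\<omega> \<circ> d)-balls of radius \<omega> \<rho>.\<close>

lemma homeomorphism_mono_on_imp_strict_mono_on:
  fixes h :: "'a::linorder_topology \<Rightarrow> 'b::linorder_topology"
  assumes "homeomorphism S T h g" and "mono_on S h"
  shows "strict_mono_on S h"
proof (rule strict_mono_onI)
  fix r s assume "r \<in> S" "s \<in> S" "r < s"
  moreover have "inj_on h S"
    using assms(1) unfolding homeomorphism_def by (metis inj_on_inverseI)
  ultimately show "h r < h s"
    using mono_onD[OF assms(2)] by (metis inj_on_eq_iff less_le)
qed

context Metric_space
begin

lemma mtopology_eqI:
  assumes "Metric_space M d'"
    and "\<And>x e. x \<in> M \<Longrightarrow> 0 < e \<Longrightarrow> \<exists>r>0. Metric_space.mball M d' x r \<subseteq> mball x e"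
    and "\<And>x e. x \<in> M \<Longrightarrow> 0 < e \<Longrightarrow> \<exists>r>0. mball x r \<subseteq> Metric_space.mball M d' x e"
  shows "Metric_space.mtopology M d' = mtopology"
proof -
  interpret D': Metric_space M d' by fact
  show ?thesis
    unfolding topology_eq D'.openin_mtopology openin_mtopology
    by (meson assms(2,3) subset_trans subsetD)
qed

definition ball_covering_bound :: "'a set \<Rightarrow> real \<Rightarrow> nat \<Rightarrow> bool" where
  "ball_covering_bound K c C \<longleftrightarrow> (\<forall>x\<in>K. \<forall>r>0. \<exists>F. finite F \<and> card F \<le> C \<and> F \<subseteq> K \<and>
     K \<inter> mball x (c * r) \<subseteq> (\<Union>y\<in>F. mball y r))"

lemma doubling_subset_iff_ball_covering_bound:
  "doubling_subset M d K \<longleftrightarrow> (\<exists>C. ball_covering_bound K 2 C)"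
  by (simp add: doubling_subset_def ball_covering_bound_def)

lemma ball_covering_boundE:
  assumes "ball_covering_bound K c C" and "x \<in> K" and "0 < r"
  obtains F where "finite F" "card F \<le> C" "F \<subseteq> K"
    "K \<inter> mball x (c * r) \<subseteq> (\<Union>y\<in>F. mball y r)"
  using assms unfolding ball_covering_bound_def by (elim ballE allE impE exE conjE) auto

lemma ball_covering_bound_one: "ball_covering_bound K 1 1"
  unfolding ball_covering_bound_def by (intro ballI allI impI exI[of _ "{x}" for x]) auto

lemma ball_covering_bound_mult:
  assumes "ball_covering_bound K a C" and "ball_covering_bound K b D" and "0 < b"
  shows "ball_covering_bound K (a * b) (C * D)"
  unfolding ball_covering_bound_def
proof (intro ballI allI impI)
  fix x and r :: real assume "x \<in> K" "0 < r"
  then obtain F where F: "finite F" "card F \<le> C" "F \<subseteq> K"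
    "K \<inter> mball x (a * (b * r)) \<subseteq> (\<Union>y\<in>F. mball y (b * r))"
    using assms(1) \<open>0 < b\<close> unfolding ball_covering_bound_def by (meson mult_pos_pos)
  have "\<forall>y\<in>F. \<exists>G. finite G \<and> card G \<le> D \<and> G \<subseteq> K \<and> K \<inter> mball y (b * r) \<subseteq> (\<Union>z\<in>G. mball z r)"
    using assms(2) F(3) \<open>0 < r\<close> unfolding ball_covering_bound_def by blast
  then obtain G where G: "\<And>y. y \<in> F \<Longrightarrow> finite (G y) \<and> card (G y) \<le> D \<and> G y \<subseteq> K \<and>
      K \<inter> mball y (b * r) \<subseteq> (\<Union>z\<in>G y. mball z r)"
    by metis
  have "card (\<Union>y\<in>F. G y) \<le> (\<Sum>y\<in>F. card (G y))"
    by (rule card_UN_le[OF F(1)])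
  also have "\<dots> \<le> card F * D"
    using sum_mono[of F "\<lambda>y. card (G y)" "\<lambda>_. D"] G by simp
  also have "\<dots> \<le> C * D"
    using F(2) by simp
  finally have "card (\<Union>y\<in>F. G y) \<le> C * D" .
  moreover have "K \<inter> mball x (a * b * r) \<subseteq> (\<Union>z\<in>(\<Union>y\<in>F. G y). mball z r)"
    using F(4) G by (fastforce simp: mult.assoc)
  ultimately show "\<exists>F'. finite F' \<and> card F' \<le> C * D \<and> F' \<subseteq> K \<and>
      K \<inter> mball x (a * b * r) \<subseteq> (\<Union>z\<in>F'. mball z r)"
    using F(1) G by (intro exI[of _ "\<Union>y\<in>F. G y"]) auto
qed

lemma ball_covering_bound_power:
  assumes "ball_covering_bound K a C" and "0 < a"
  shows "ball_covering_bound K (a ^ n) (C ^ n)"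
proof (induction n)
  case 0
  show ?case using ball_covering_bound_one by simp
next
  case (Suc n)
  show ?case
    using ball_covering_bound_mult[OF assms(1) Suc] \<open>0 < a\<close> by simp
qed

lemma ball_covering_bound_mono:
  assumes "ball_covering_bound K a C" and "b \<le> a"
  shows "ball_covering_bound K b C"
proof -
  have "mball x (b * r) \<subseteq> mball x (a * r)" if "0 < r" for x r
    using \<open>b \<le> a\<close> that by (intro mball_subset_concentric) simp
  then show ?thesis
    using assms(1) unfolding ball_covering_bound_def by (meson inf_mono order.refl order.trans)
qed

end

lemma doubling_growth_power:
  fixes f :: "real \<Rightarrow> real"
  assumes "0 < c" and growth: "\<And>t. 0 \<le> t \<Longrightarrow> 2 * f t \<le> f (c * t)" and "0 \<le> t"
  shows "2 ^ n * f t \<le> f (c ^ n * t)"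
proof (induction n)
  case 0
  show ?case by simp
next
  case (Suc n)
  have "2 ^ Suc n * f t \<le> 2 * f (c ^ n * t)"
    using Suc by simp
  also have "\<dots> \<le> f (c ^ Suc n * t)"
    using growth[of "c ^ n * t"] \<open>0 < c\<close> \<open>0 \<le> t\<close> by (simp add: mult.assoc)
  finally show ?case .
qed

lemma nonneg_subset_image_if_doubling_growth:
  fixes f :: "real \<Rightarrow> real"
  assumes "continuous_on {0..} f" and "f 0 = 0" and "0 < f 1"
    and "0 < c" and "\<And>t. 0 \<le> t \<Longrightarrow> 2 * f t \<le> f (c * t)"
  shows "{0..} \<subseteq> f ` {0..}"
proof
  fix r :: real assume "r \<in> {0..}"
  obtain n where "r / f 1 < 2 ^ n"
    using real_arch_pow[of 2 "r / f 1"] by auto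
  then have "r \<le> f (c ^ n)"
    using doubling_growth_power[of c f 1 n] assms(4,5) \<open>0 < f 1\<close> by (simp add: field_simps)
  moreover have "continuous_on {0..c ^ n} f"
    using assms(1) by (rule continuous_on_subset) auto
  ultimately obtain \<rho> where "0 \<le> \<rho>" "f \<rho> = r"
    using IVT'[of f 0 r "c ^ n"] \<open>r \<in> {0..}\<close> \<open>f 0 = 0\<close> \<open>0 < c\<close> by auto
  then show "r \<in> f ` {0..}"
    by auto
qed

locale modulus_metric = Metric_space +
  fixes \<omega> :: "real \<Rightarrow> real"
  assumes modulus_zero [simp]: "\<omega> 0 = 0"
    and modulus_strict_mono: "strict_mono_on {0..} \<omega>"
    and modulus_subadditive: "\<And>s t. 0 \<le> s \<Longrightarrow> 0 \<le> t \<Longrightarrow> \<omega> (s + t) \<le> \<omega> s + \<omega> t"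
begin

lemma modulus_less_iff: "0 \<le> s \<Longrightarrow> 0 \<le> t \<Longrightarrow> \<omega> s < \<omega> t \<longleftrightarrow> s < t"
  using strict_mono_on_less[OF modulus_strict_mono] by simp

lemma modulus_le_iff: "0 \<le> s \<Longrightarrow> 0 \<le> t \<Longrightarrow> \<omega> s \<le> \<omega> t \<longleftrightarrow> s \<le> t"
  using strict_mono_on_less_eq[OF modulus_strict_mono] by simp

lemma modulus_pos: "0 < t \<Longrightarrow> 0 < \<omega> t"
  using modulus_less_iff[of 0 t] by simp

lemma modulus_nonneg: "0 \<le> t \<Longrightarrow> 0 \<le> \<omega> t"
  using modulus_le_iff[of 0 t] by simp

sublocale Mod: Metric_space M "\<lambda>x y. \<omega> (d x y)"
proof
  fix x y z
  show "0 \<le> \<omega> (d x y)" by (simp add: modulus_nonneg)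
  show "\<omega> (d x y) = \<omega> (d y x)" by (simp add: commute)
  have "\<omega> (d x y) = 0 \<longleftrightarrow> d x y = 0"
    using modulus_pos[of "d x y"] nonneg[of x y] by (auto simp: order_le_less)
  then show "\<omega> (d x y) = 0 \<longleftrightarrow> x = y" if "x \<in> M" "y \<in> M"
    using that zero by simp
  assume xyz: "x \<in> M" "y \<in> M" "z \<in> M"
  then have "\<omega> (d x z) \<le> \<omega> (d x y + d y z)"
    by (simp add: modulus_le_iff triangle)
  also have "\<dots> \<le> \<omega> (d x y) + \<omega> (d y z)"
    by (simp add: modulus_subadditive)
  finally show "\<omega> (d x z) \<le> \<omega> (d x y) + \<omega> (d y z)" .
qed

lemma mball_modulus: "0 \<le> r \<Longrightarrow> Mod.mball x (\<omega> r) = mball x r"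
  by (auto simp: modulus_less_iff)

lemma mtopology_modulus:
  assumes "continuous (at 0 within {0..}) \<omega>"
  shows "Mod.mtopology = mtopology"
proof (rule mtopology_eqI[OF Mod.Metric_space_axioms])
  fix x and e :: real assume "0 < e"
  have "Mod.mball x (\<omega> e) \<subseteq> mball x e"
    using mball_modulus[of e x] \<open>0 < e\<close> by simp
  then show "\<exists>r>0. Mod.mball x r \<subseteq> mball x e"
    using modulus_pos[OF \<open>0 < e\<close>] by blast
  obtain \<delta> where "0 < \<delta>" and \<delta>: "\<And>t. t \<in> {0..} \<Longrightarrow> dist t 0 < \<delta> \<Longrightarrow> dist (\<omega> t) (\<omega> 0) < e"
    using assms \<open>0 < e\<close> unfolding continuous_within_eps_delta by blast
  have "mball x \<delta> \<subseteq> Mod.mball x e"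
  proof
    fix y assume y: "y \<in> mball x \<delta>"
    then have "\<omega> (d x y) < e"
      using \<delta>[of "d x y"] by (simp add: dist_real_def modulus_nonneg)
    then show "y \<in> Mod.mball x e"
      using y by simp
  qed
  then show "\<exists>r>0. mball x r \<subseteq> Mod.mball x e"
    using \<open>0 < \<delta>\<close> by blast
qed

lemma quasisymmetric_id_modulus:
  assumes "continuous (at 0 within {0..}) \<omega>"
    and "strict_mono_on {0..} \<eta>" and "\<eta> ` {0..} = {0..}"
    and control: "\<And>s t. 0 \<le> s \<Longrightarrow> 0 \<le> t \<Longrightarrow> \<omega> (s * t) \<le> \<eta> s * \<omega> t"
  shows "quasisymmetric M d M (\<lambda>x y. \<omega> (d x y)) id"
  unfolding quasisymmetric_def
proof (intro conjI exI[of _ \<eta>] ballI allI impI)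
  show "embedding_map mtopology Mod.mtopology id"
    by (simp add: embedding_map_def mtopology_modulus[OF assms(1)])
  show "strict_mono_on {0..} \<eta>" "\<eta> ` {0..} = {0..}"
    by fact+
  fix x1 x2 x3 and t :: real
  assume "x1 \<in> M" "x2 \<in> M" "x3 \<in> M" "0 \<le> t" "d x1 x2 \<le> t * d x1 x3"
  then have "\<omega> (d x1 x2) \<le> \<omega> (t * d x1 x3)"
    by (simp add: modulus_le_iff)
  also have "\<dots> \<le> \<eta> t * \<omega> (d x1 x3)"
    using control \<open>0 \<le> t\<close> by simp
  finally show "\<omega> (d (id x1) (id x2)) \<le> \<eta> t * \<omega> (d (id x1) (id x3))"
    by simp
qed

lemma doubling_subset_modulus:
  assumes "continuous_on {0..} \<omega>"
    and "0 < c" and growth: "\<And>t. 0 \<le> t \<Longrightarrow> 2 * \<omega> t \<le> \<omega> (c * t)"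
    and "doubling_subset M d K"
  shows "doubling_subset M (\<lambda>x y. \<omega> (d x y)) K"
proof -
  obtain C where "ball_covering_bound K 2 C"
    using assms(4) doubling_subset_iff_ball_covering_bound by blast
  then have "ball_covering_bound K (2 ^ m) (C ^ m)" for m
    by (rule ball_covering_bound_power) simp
  moreover obtain m where "c \<le> 2 ^ m"
    using real_arch_pow[of 2 c] by (auto dest: less_imp_le)
  ultimately have cover: "ball_covering_bound K c (C ^ m)"
    by (rule ball_covering_bound_mono)
  have onto: "{0..} \<subseteq> \<omega> ` {0..}"
    using assms(1) modulus_zero modulus_pos[of 1] assms(2) growth
    by (rule nonneg_subset_image_if_doubling_growth) simp_all
  have "Mod.ball_covering_bound K 2 (C ^ m)"
    unfolding Mod.ball_covering_bound_def
  proof (intro ballI allI impI)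
    fix x and r :: real assume "x \<in> K" "0 < r"
    have "r \<in> \<omega> ` {0..}"
      using \<open>0 < r\<close> by (intro subsetD[OF onto]) simp
    then obtain \<rho> where "0 \<le> \<rho>" and r: "r = \<omega> \<rho>"
      by auto
    then have "0 < \<rho>"
      using \<open>0 < r\<close> modulus_less_iff[of 0 \<rho>] by simp
    then obtain F where F: "finite F" "card F \<le> C ^ m" "F \<subseteq> K"
      "K \<inter> mball x (c * \<rho>) \<subseteq> (\<Union>y\<in>F. mball y \<rho>)"
      using ball_covering_boundE[OF cover \<open>x \<in> K\<close>] by blast
    have "K \<inter> Mod.mball x (2 * r) \<subseteq> K \<inter> mball x (c * \<rho>)"
    proof (intro Int_mono order.refl subsetI)
      fix z assume z: "z \<in> Mod.mball x (2 * r)"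
      have "\<omega> (d x z) < \<omega> (c * \<rho>)"
        using z growth[OF \<open>0 \<le> \<rho>\<close>] r by simp
      then show "z \<in> mball x (c * \<rho>)"
        using z \<open>0 < c\<close> \<open>0 \<le> \<rho>\<close> modulus_less_iff[of "d x z" "c * \<rho>"] by simp
    qed
    also have "\<dots> \<subseteq> (\<Union>y\<in>F. mball y \<rho>)"
      by (rule F(4))
    also have "\<dots> = (\<Union>y\<in>F. Mod.mball y r)"
      unfolding r using mball_modulus[OF \<open>0 \<le> \<rho>\<close>] by simp
    finally show "\<exists>F. finite F \<and> card F \<le> C ^ m \<and> F \<subseteq> K \<and>
        K \<inter> Mod.mball x (2 * r) \<subseteq> (\<Union>y\<in>F. Mod.mball y r)"
      using F(1-3) by (intro exI[of _ F]) simp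
  qed
  then show ?thesis
    using Mod.doubling_subset_iff_ball_covering_bound by blast
qed

end

lemma holder_like_modulus_imp_modulus_metric:
  "holder_like_modulus \<omega> \<Longrightarrow> Metric_space M d \<Longrightarrow> modulus_metric M d \<omega>"
  unfolding holder_like_modulus_def modulus_metric_def modulus_metric_axioms_def by blast

lemma holder_like_modulus_control:
  assumes "holder_like_modulus \<omega>"
  obtains \<eta> where "strict_mono_on {0..} \<eta>" and "\<eta> ` {0..} = {0..}"
    and "\<And>s t. 0 \<le> s \<Longrightarrow> 0 \<le> t \<Longrightarrow> \<omega> (s * t) \<le> \<eta> s * \<omega> t"
proof -
  obtain h g where "homeomorphism {0..} {0..} h g" "mono_on {0..} h"
    and "\<forall>s\<ge>0. \<forall>t\<ge>0. \<omega> (s * t) \<le> h s * \<omega> t"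
    using assms unfolding holder_like_modulus_def by blast
  moreover from this(1) have "h ` {0..} = {0..}"
    by (simp add: homeomorphism_def)
  ultimately show thesis
    using that[of h] homeomorphism_mono_on_imp_strict_mono_on by blast
qed

lemma holder_like_modulus_doubling_growth:
  assumes "holder_like_modulus \<omega>"
  obtains c where "0 < c" and "\<And>t. 0 \<le> t \<Longrightarrow> 2 * \<omega> t \<le> \<omega> (c * t)"
proof -
  obtain \<eta> where mono: "strict_mono_on {0..} \<eta>" and onto: "\<eta> ` {0..} = {0..}"
    and control: "\<And>s t. 0 \<le> s \<Longrightarrow> 0 \<le> t \<Longrightarrow> \<omega> (s * t) \<le> \<eta> s * \<omega> t"
    using holder_like_modulus_control[OF assms] by blast
  obtain a where "0 \<le> a" "\<eta> a = 1/2"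
    using onto by (metis atLeast_iff imageE less_eq_real_def half_gt_zero zero_less_one)
  obtain b where "0 \<le> b" "\<eta> b = 0"
    using onto by (metis atLeast_iff imageE order_refl)
  have "0 < a"
    using strict_mono_on_leD[OF mono, of 0 b] \<open>0 \<le> a\<close> \<open>\<eta> a = 1/2\<close> \<open>0 \<le> b\<close> \<open>\<eta> b = 0\<close>
    by (auto simp: order_le_less)
  have "2 * \<omega> t \<le> \<omega> (1 / a * t)" if "0 \<le> t" for t
    using control[of a "t / a"] \<open>0 < a\<close> \<open>\<eta> a = 1/2\<close> that by simp
  then show thesis
    using that[of "1 / a"] \<open>0 < a\<close> by simp
qed

theorem mainTheorem8:
  fixes \<omega> :: "real \<Rightarrow> real" and X :: "'a set" and d :: "'a \<Rightarrow> 'a \<Rightarrow> real"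
  assumes "holder_like_modulus \<omega>"
    and "Metric_space X d"
  shows "Metric_space X (\<lambda>x y. \<omega> (d x y))
    \<and> quasisymmetric X d X (\<lambda>x y. \<omega> (d x y)) id
    \<and> (\<forall>K. K \<subseteq> X \<longrightarrow> doubling_subset X d K \<longrightarrow> doubling_subset X (\<lambda>x y. \<omega> (d x y)) K)"
proof -
  interpret modulus_metric X d \<omega>
    using holder_like_modulus_imp_modulus_metric[OF assms] .
  have continuous: "continuous_on {0..} \<omega>"
    using assms(1) unfolding holder_like_modulus_def by blast
  then have "continuous (at 0 within {0..}) \<omega>"
    by (simp add: continuous_on_eq_continuous_within)
  moreover obtain \<eta> where "strict_mono_on {0..} \<eta>" "\<eta> ` {0..} = {0..}"
    and "\<And>s t. 0 \<le> s \<Longrightarrow> 0 \<le> t \<Longrightarrow> \<omega> (s * t) \<le> \<eta> s * \<omega> t"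
    using holder_like_modulus_control[OF assms(1)] by blast
  moreover obtain c where "0 < c" "\<And>t. 0 \<le> t \<Longrightarrow> 2 * \<omega> t \<le> \<omega> (c * t)"
    using holder_like_modulus_doubling_growth[OF assms(1)] by blast
  ultimately show ?thesis
    using Mod.Metric_space_axioms quasisymmetric_id_modulus doubling_subset_modulus[OF continuous]
    by blast
qed

end
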